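(* Let $(\mathcal{X},\rho,\nu)$ be a metric measure space where $\rho$ is a doubling metric and $\nu$ is a finite Borel measure. Then the set $\mathcal{F}_0$ of measurable functions with $\nu$-negligible boundary is dense in $L^1(\mathcal{X},\nu)$: for every $\eta\in L^1(\mathcal{X},\nu)$ and every $\delta>0$ there is $\eta'\in L^1(\mathcal{X},\nu)$ with $\nu(\partial_{\eta'}\mathcal{X})=0$ and $\|\eta-\eta'\|_{L^1(\mathcal{X},\nu)}<\delta$.
   Context: A metric is doubling (with doubling dimension $d$) if every open ball $B(x,r)$ can be covered by $2^d$ balls of radius $r/2$. For a measurable $\eta$, $\mathrm{margin}_\eta(x)=\inf\{\rho(x,x'):\eta(x')\ne\eta(x)\}$ (infimum of empty set $=+\infty$) and $\partial_\eta\mathcal{X}=\{x:\mathrm{margin}_\eta(x)=0\}$. $\mathcal{F}_0=\{\eta \text{ measurable}:\nu(\partial_\eta\mathcal{X})=0\}$. *)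

theory Defs
  imports "HOL-Analysis.Analysis"
begin

definition doubling_dim :: "real \<Rightarrow> ('a::metric_space) itself \<Rightarrow> bool" where
  "doubling_dim d (TYPE('a)) \<longleftrightarrow>
     (\<forall>(x::'a) r. \<exists>C. finite C \<and> real (card C) \<le> 2 powr d \<and> ball x r \<subseteq> (\<Union>c\<in>C. ball c (r/2)))"

definition doubling_metric :: "('a::metric_space) itself \<Rightarrow> bool" where
  "doubling_metric T \<longleftrightarrow> (\<exists>d. doubling_dim d T)"

text \<open>margin; the infimum of the empty set in ereal is \<infinity>.\<close>
definition margin :: "('a::metric_space \<Rightarrow> 'b) \<Rightarrow> 'a \<Rightarrow> ereal" where
  "margin \<eta> x = (INF x'\<in>{x'. \<eta> x' \<noteq> \<eta> x}. ereal (dist x x'))"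

definition boundary :: "('a::metric_space \<Rightarrow> 'b) \<Rightarrow> 'a set" where
  "boundary \<eta> = {x. margin \<eta> x = 0}"

end

(* Call B a continuity set if B is Borel and the boundary of its indicator, which is the
   topological frontier of B, is null. Continuity sets are closed under complements and finite
   unions. An open set U is approximated from inside by superlevel sets {t < infdist x (-U)}:
   the boundary of such a set lies in the level set {infdist x (-U) = t}, and only countably
   many levels carry positive mass, so almost every t yields a continuity set. Induction over
   the generated sigma-algebra approximates every Borel set in measure by continuity sets,
   hence every simple function in L1 by functions with null boundary, and dominated
   convergence passes to all integrable functions. *)

theory Submission
  imports Defs
begin

lemma margin_nonneg: "0 \<le> margin f x"
  unfolding margin_def by (auto intro: INF_greatest)

lemma not_in_boundary_iff:
  "x \<notin> boundary f \<longleftrightarrow> (\<forall>\<^sub>F y in nhds x. f y = f x)"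
proof -
  have "x \<notin> boundary f \<longleftrightarrow> 0 < margin f x"
    using margin_nonneg[of f x] by (simp add: boundary_def order_less_le)
  also have "\<dots> \<longleftrightarrow> (\<exists>r>0. \<forall>y. dist y x < r \<longrightarrow> f y = f x)"
  proof
    assume "0 < margin f x"
    then obtain r where r: "0 < ereal r" "ereal r < margin f x" using ereal_dense2 by blast
    have "f y = f x" if "dist y x < r" for y
    proof (rule ccontr)
      assume "f y \<noteq> f x"
      then have "margin f x \<le> ereal (dist x y)" unfolding margin_def by (auto intro: INF_lower)
      with r(2) have "ereal r < ereal (dist x y)" by (rule order.strict_trans2)
      with that show False by (simp add: dist_commute)
    qed
    moreover have "r > 0" using r(1) by simp
    ultimately show "\<exists>r>0. \<forall>y. dist y x < r \<longrightarrow> f y = f x" by blast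
  next
    assume "\<exists>r>0. \<forall>y. dist y x < r \<longrightarrow> f y = f x"
    then obtain r where r: "r > 0" "\<And>y. dist y x < r \<Longrightarrow> f y = f x" by blast
    have "ereal r \<le> margin f x"
      unfolding margin_def
    proof (rule INF_greatest)
      fix y assume "y \<in> {y. f y \<noteq> f x}"
      with r(2)[of y] have "\<not> dist x y < r" by (auto simp: dist_commute)
      then show "ereal r \<le> ereal (dist x y)" by simp
    qed
    moreover have "0 < ereal r" using r(1) by simp
    ultimately show "0 < margin f x" by (rule order.strict_trans2[rotated])
  qed
  also have "\<dots> \<longleftrightarrow> (\<forall>\<^sub>F y in nhds x. f y = f x)"
    by (simp add: eventually_nhds_metric)
  finally show ?thesis .
qed

lemma closed_boundary: "closed (boundary f)"
  unfolding closed_def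
proof (subst open_subopen, intro ballI)
  fix x assume "x \<in> - boundary f"
  then have "\<forall>\<^sub>F y in nhds x. f y = f x" by (simp add: not_in_boundary_iff)
  then obtain S where S: "open S" "x \<in> S" "\<And>y. y \<in> S \<Longrightarrow> f y = f x"
    unfolding eventually_nhds by blast
  have "y \<notin> boundary f" if "y \<in> S" for y
  proof -
    have "\<forall>\<^sub>F z in nhds y. f z = f y"
      using eventually_nhds_in_open[OF S(1) that] by (rule eventually_mono) (metis S(3) that)
    then show ?thesis by (simp add: not_in_boundary_iff)
  qed
  with S(1,2) show "\<exists>T. open T \<and> x \<in> T \<and> T \<subseteq> - boundary f" by blast
qed

lemma boundary_comp2_subset: "boundary (\<lambda>x. h (f x) (g x)) \<subseteq> boundary f \<union> boundary g"
proof
  fix x assume "x \<in> boundary (\<lambda>x. h (f x) (g x))"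
  moreover have "\<forall>\<^sub>F y in nhds x. h (f y) (g y) = h (f x) (g x)"
    if "\<forall>\<^sub>F y in nhds x. f y = f x" "\<forall>\<^sub>F y in nhds x. g y = g x"
    using eventually_conj[OF that] by eventually_elim simp
  ultimately show "x \<in> boundary f \<union> boundary g"
    using not_in_boundary_iff[of x f] not_in_boundary_iff[of x g]
      not_in_boundary_iff[of x "\<lambda>x. h (f x) (g x)"] by blast
qed

lemma boundary_comp_subset: "boundary (\<lambda>x. h (f x)) \<subseteq> boundary f"
  using boundary_comp2_subset[of "\<lambda>a b. h a" f f] by simp

lemma boundary_const [simp]: "boundary (\<lambda>x. c) = {}"
  using not_in_boundary_iff[of _ "\<lambda>x. c"] by auto

lemma boundary_indicator_superlevel_subset:
  fixes f :: "'a::metric_space \<Rightarrow> real"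
  assumes "continuous_on UNIV f"
  shows "boundary (indicator {x. t < f x} :: 'a \<Rightarrow> real) \<subseteq> {x. f x = t}"
proof
  fix x assume x: "x \<in> boundary (indicator {x. t < f x} :: 'a \<Rightarrow> real)"
  have opens: "open {x. t < f x}" "open {x. f x < t}"
    using assms by (auto intro: open_Collect_less continuous_on_const)
  have "\<forall>\<^sub>F y in nhds x. (indicator {x. t < f x} y :: real) = indicator {x. t < f x} x"
    if "f x \<noteq> t"
  proof (cases "t < f x")
    case True
    have "\<forall>\<^sub>F y in nhds x. y \<in> {x. t < f x}"
      using True opens(1) by (intro eventually_nhds_in_open) simp_all
    then show ?thesis by (rule eventually_mono) (simp add: True)
  next
    case False
    have "\<forall>\<^sub>F y in nhds x. y \<in> {x. f x < t}"
      using False that opens(2) by (intro eventually_nhds_in_open) simp_all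
    then show ?thesis by (rule eventually_mono) (simp add: False)
  qed
  with x show "x \<in> {x. f x = t}"
    using not_in_boundary_iff[of x "indicator {x. t < f x} :: 'a \<Rightarrow> real"] by blast
qed

lemma boundary_in_null_sets:
  assumes "sets M = sets borel" "boundary g \<subseteq> N" "N \<in> null_sets M"
  shows "boundary g \<in> null_sets M"
proof -
  have "boundary g \<in> sets M"
    using borel_closed[OF closed_boundary] assms(1) by simp
  then show ?thesis
    using null_sets_subset[OF assms(3) _ assms(2)] by simp
qed

definition continuity_set :: "'a::metric_space measure \<Rightarrow> 'a set \<Rightarrow> bool" where
  "continuity_set M B \<longleftrightarrow> B \<in> sets M \<and> boundary (indicator B :: 'a \<Rightarrow> real) \<in> null_sets M"

lemma continuity_set_empty: "continuity_set M {}"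
  by (simp add: continuity_set_def indicator_def[abs_def])

lemma continuity_set_Compl:
  assumes "sets M = sets borel" "continuity_set M B"
  shows "continuity_set M (- B)"
proof -
  have "indicator (- B) = (\<lambda>x. 1 - indicator B x :: real)"
    by (simp add: indicator_def fun_eq_iff)
  then have "boundary (indicator (- B) :: 'a \<Rightarrow> real) \<subseteq> boundary (indicator B :: 'a \<Rightarrow> real)"
    using boundary_comp_subset by metis
  then have "boundary (indicator (- B) :: 'a \<Rightarrow> real) \<in> null_sets M"
    using assms(2) by (auto simp: continuity_set_def intro: boundary_in_null_sets[OF assms(1)])
  moreover have "- B \<in> sets M"
  proof -
    have "- B = space M - B"
      using sets_eq_imp_space_eq[OF assms(1)] by auto
    then show ?thesis
      using assms(2) by (simp add: continuity_set_def sets.compl_sets)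
  qed
  ultimately show ?thesis
    by (simp add: continuity_set_def)
qed

lemma continuity_set_UNIV:
  assumes "sets M = sets borel"
  shows "continuity_set M UNIV"
  using continuity_set_Compl[OF assms continuity_set_empty] by simp

lemma continuity_set_Un:
  assumes "sets M = sets borel" "continuity_set M A" "continuity_set M B"
  shows "continuity_set M (A \<union> B)"
proof -
  have "indicator (A \<union> B) = (\<lambda>x. max (indicator A x) (indicator B x) :: real)"
    by (simp add: indicator_def fun_eq_iff)
  then have "boundary (indicator (A \<union> B) :: 'a \<Rightarrow> real)
      \<subseteq> boundary (indicator A :: 'a \<Rightarrow> real) \<union> boundary (indicator B :: 'a \<Rightarrow> real)"
    using boundary_comp2_subset by metis
  then have "boundary (indicator (A \<union> B) :: 'a \<Rightarrow> real) \<in> null_sets M"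
    using assms(2,3) by (auto simp: continuity_set_def intro: boundary_in_null_sets[OF assms(1)])
  then show ?thesis
    using assms(2,3) by (simp add: continuity_set_def sets.Un)
qed

lemma continuity_set_finite_UN:
  assumes "sets M = sets borel" "finite I" "\<And>i. i \<in> I \<Longrightarrow> continuity_set M (B i)"
  shows "continuity_set M (\<Union>i\<in>I. B i)"
  using assms(2,3)
  by (induction I rule: finite_induct) (auto intro: continuity_set_empty continuity_set_Un[OF assms(1)])

lemma (in finite_measure) countable_nonnull_level_sets:
  fixes f :: "'a \<Rightarrow> 'b::t1_space"
  assumes "f \<in> borel_measurable M"
  shows "countable {t. measure M (f -` {t} \<inter> space M) \<noteq> 0}"
proof -
  interpret distr: finite_measure "distr M borel f"
    using assms by (intro finite_measure_distr) simp
  have "measure (distr M borel f) {t} = measure M (f -` {t} \<inter> space M)" for t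
    using measure_distr[OF assms borel_singleton[OF sets.empty_sets]] by simp
  then show ?thesis
    using distr.countable_support by simp
qed

lemma (in finite_measure) measure_small_positive_values:
  fixes f :: "'a \<Rightarrow> real"
  assumes f: "f \<in> borel_measurable M" and "e > 0"
  obtains d where "d > 0" "measure M {x \<in> space M. 0 < f x \<and> f x \<le> d} < e"
proof -
  define D where "D n = f -` {0<..inverse (real (Suc n))} \<inter> space M" for n :: nat
  have "range D \<subseteq> sets M"
    unfolding D_def using measurable_sets[OF f greaterThanAtMost_borel] by auto
  moreover have "decseq D"
  proof (rule decseq_SucI)
    fix n
    have le: "inverse (real (Suc (Suc n))) \<le> inverse (real (Suc n))"
      by (intro le_imp_inverse_le) auto
    show "D (Suc n) \<subseteq> D n"
      unfolding D_def by (auto simp del: of_nat_Suc dest: order_trans[OF _ le])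
  qed
  ultimately have "(\<lambda>n. measure M (D n)) \<longlonglongrightarrow> measure M (\<Inter>n. D n)"
    by (rule finite_Lim_measure_decseq)
  moreover have "(\<Inter>n. D n) = {}"
  proof -
    have "x \<notin> (\<Inter>n. D n)" for x
    proof
      assume x: "x \<in> (\<Inter>n. D n)"
      then have "0 < f x" by (simp add: D_def)
      then obtain n where "inverse (real (Suc n)) < f x"
        using reals_Archimedean by blast
      moreover have "x \<in> D n" using x by blast
      ultimately show False by (simp add: D_def del: of_nat_Suc)
    qed
    then show ?thesis by blast
  qed
  ultimately have "(\<lambda>n. measure M (D n)) \<longlonglongrightarrow> 0"
    by simp
  from order_tendstoD(2)[OF this \<open>e > 0\<close>] obtain N where "measure M (D N) < e"
    unfolding eventually_sequentially by blast
  moreover have "D N = {x \<in> space M. 0 < f x \<and> f x \<le> inverse (real (Suc N))}"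
    unfolding D_def by auto
  ultimately show thesis
    using that[of "inverse (real (Suc N))"] by simp
qed

lemma continuity_superlevel_set_exists:
  fixes f :: "'a::metric_space \<Rightarrow> real"
  assumes sb: "sets M = sets borel" and "finite_measure M"
    and f: "continuous_on UNIV f" and "e > 0"
  obtains t where "t > 0" "continuity_set M {x. t < f x}" "measure M {x. 0 < f x \<and> f x \<le> t} < e"
proof -
  interpret finite_measure M by fact
  have space: "space M = UNIV" using sets_eq_imp_space_eq[OF sb] by simp
  have f_meas: "f \<in> borel_measurable M"
    by (subst measurable_cong_sets[OF sb refl]) (rule borel_measurable_continuous_onI[OF f])
  have level_sets: "{x. f x \<in> S} \<in> sets M" if "S \<in> sets borel" for S
    using measurable_sets[OF f_meas that] space by (simp add: vimage_def)
  obtain d where d: "d > 0" "measure M {x. 0 < f x \<and> f x \<le> d} < e"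
    using measure_small_positive_values[OF f_meas \<open>e > 0\<close>] space by auto
  have "\<not> {0<..<d} \<subseteq> {t. measure M (f -` {t} \<inter> space M) \<noteq> 0}"
    using countable_subset[OF _ countable_nonnull_level_sets[OF f_meas]]
      uncountable_open_interval[of 0 d] d(1) by auto
  then obtain t where t: "0 < t" "t < d" "measure M {x. f x = t} = 0"
    using space by (auto simp: vimage_def)
  have "{x. f x = t} \<in> null_sets M"
    using t(3) level_sets[OF borel_singleton[OF sets.empty_sets]]
    by (simp add: null_sets_def emeasure_eq_measure)
  then have "boundary (indicator {x. t < f x} :: 'a \<Rightarrow> real) \<in> null_sets M"
    by (rule boundary_in_null_sets[OF sb boundary_indicator_superlevel_subset[OF f]])
  then have "continuity_set M {x. t < f x}"
    using level_sets[OF greaterThan_borel] by (simp add: continuity_set_def)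
  moreover have "measure M {x. 0 < f x \<and> f x \<le> t} \<le> measure M {x. 0 < f x \<and> f x \<le> d}"
    using level_sets[OF greaterThanAtMost_borel, of 0 d] t(2) by (intro finite_measure_mono) auto
  with d(2) have "measure M {x. 0 < f x \<and> f x \<le> t} < e"
    by linarith
  ultimately show thesis
    using t(1) that by blast
qed

lemma open_continuity_set_approx:
  fixes U :: "'a::metric_space set"
  assumes sb: "sets M = sets borel" and fm: "finite_measure M" and "open U" and "e > 0"
  obtains B where "continuity_set M B" "measure M (sym_diff U B) < e"
proof (cases "U = UNIV")
  case True
  with that show thesis
    using continuity_set_UNIV[OF sb] \<open>e > 0\<close> by simp
next
  case False
  define f where "f x = infdist x (- U)" for x
  have "closed (- U)" "- U \<noteq> {}"
    using \<open>open U\<close> False by auto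
  then have "x \<in> U \<longleftrightarrow> 0 < f x" for x
    using in_closed_iff_infdist_zero[of "- U" x] infdist_nonneg[of x "- U"] unfolding f_def by auto
  then have U_eq: "U = {x. 0 < f x}"
    by auto
  have "continuous_on UNIV f"
    unfolding f_def by (intro continuous_intros)
  then obtain t where t: "t > 0" "continuity_set M {x. t < f x}"
    "measure M {x. 0 < f x \<and> f x \<le> t} < e"
    using continuity_superlevel_set_exists[OF sb fm _ \<open>e > 0\<close>] by blast
  have "sym_diff U {x. t < f x} = {x. 0 < f x \<and> f x \<le> t}"
    using t(1) by (auto simp: U_eq)
  with t that show thesis by metis
qed

lemma (in finite_measure) measure_UN_Diff_initial_segment_less:
  fixes A :: "nat \<Rightarrow> 'a set"
  assumes A: "\<And>i. A i \<in> sets M" and "e > 0"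
  obtains N where "measure M ((\<Union>i. A i) - (\<Union>i<N. A i)) < e"
proof -
  have "incseq (\<lambda>N. \<Union>i<N. A i)"
    unfolding incseq_def by (intro allI impI UN_mono) auto
  then have "(\<lambda>N. measure M (\<Union>i<N. A i)) \<longlonglongrightarrow> measure M (\<Union>N. \<Union>i<N. A i)"
    using A by (intro finite_Lim_measure_incseq) auto
  moreover have "(\<Union>N. \<Union>i<N. A i) = (\<Union>i. A i)"
    using UN_UN_finite_eq[of A] by (simp add: atLeast0LessThan)
  ultimately have "(\<lambda>N. measure M (\<Union>i<N. A i)) \<longlonglongrightarrow> measure M (\<Union>i. A i)"
    by simp
  from order_tendstoD(1)[OF this, of "measure M (\<Union>i. A i) - e"] \<open>e > 0\<close>
  obtain N where "measure M (\<Union>i. A i) - e < measure M (\<Union>i<N. A i)"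
    unfolding eventually_sequentially by auto
  then have "measure M ((\<Union>i. A i) - (\<Union>i<N. A i)) < e"
    using A by (subst finite_measure_Diff) auto
  then show thesis by (rule that)
qed

lemma continuity_set_approx_UN:
  fixes A :: "nat \<Rightarrow> 'a::metric_space set"
  assumes sb: "sets M = sets borel" and "finite_measure M"
    and A: "\<And>i. A i \<in> sets M"
    and approx: "\<And>i e. e > 0 \<Longrightarrow> \<exists>B. continuity_set M B \<and> measure M (sym_diff (A i) B) < e"
    and "e > 0"
  shows "\<exists>B. continuity_set M B \<and> measure M (sym_diff (\<Union>i. A i) B) < e"
proof -
  interpret finite_measure M by fact
  obtain N where tail: "measure M ((\<Union>i. A i) - (\<Union>i<N. A i)) < e / 2"
    by (rule measure_UN_Diff_initial_segment_less[of A "e / 2"]) (use A \<open>e > 0\<close> in auto)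
  define e' where "e' = e / (2 * (real N + 1))"
  have "e' > 0" using \<open>e > 0\<close> by (simp add: e'_def)
  then have "\<forall>i. \<exists>B. continuity_set M B \<and> measure M (sym_diff (A i) B) < e'"
    using approx by blast
  then obtain B where B: "\<And>i. continuity_set M (B i)"
    "\<And>i. measure M (sym_diff (A i) (B i)) < e'"
    by metis
  have B_sets: "B i \<in> sets M" for i
    using B(1) by (simp add: continuity_set_def)
  have UN_sets: "(\<Union>i. A i) \<in> sets M" "(\<Union>i<N. A i) \<in> sets M"
    "(\<Union>i<N. sym_diff (A i) (B i)) \<in> sets M"
    using A B_sets by auto
  have "sym_diff (\<Union>i. A i) (\<Union>i<N. B i)
      \<subseteq> ((\<Union>i. A i) - (\<Union>i<N. A i)) \<union> (\<Union>i<N. sym_diff (A i) (B i))"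
    by blast
  then have "measure M (sym_diff (\<Union>i. A i) (\<Union>i<N. B i))
      \<le> measure M (((\<Union>i. A i) - (\<Union>i<N. A i)) \<union> (\<Union>i<N. sym_diff (A i) (B i)))"
    using UN_sets by (intro finite_measure_mono) auto
  also have "\<dots> \<le> measure M ((\<Union>i. A i) - (\<Union>i<N. A i)) + measure M (\<Union>i<N. sym_diff (A i) (B i))"
    using UN_sets by (intro measure_Un_le) auto
  also have "measure M (\<Union>i<N. sym_diff (A i) (B i)) \<le> (\<Sum>i<N. measure M (sym_diff (A i) (B i)))"
    using A B_sets by (intro measure_UNION_le) auto
  also have "\<dots> \<le> real N * e'"
    using sum_bounded_above[of "{..<N}" "\<lambda>i. measure M (sym_diff (A i) (B i))" e'] B(2)
    by (simp add: less_imp_le)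
  also have "\<dots> \<le> e / 2"
    using \<open>e > 0\<close> by (simp add: e'_def field_simps)
  finally have "measure M (sym_diff (\<Union>i. A i) (\<Union>i<N. B i)) < e"
    using tail by linarith
  moreover have "continuity_set M (\<Union>i<N. B i)"
    using continuity_set_finite_UN[OF sb] B(1) by blast
  ultimately show ?thesis by blast
qed

lemma continuity_set_approx:
  assumes sb: "sets M = sets borel" and fm: "finite_measure M" and "A \<in> sets M" and "e > 0"
  obtains B where "continuity_set M B" "measure M (sym_diff A B) < e"
proof -
  have "A \<in> sigma_sets UNIV {S. open S}"
    using \<open>A \<in> sets M\<close> sb by (simp add: sets_borel)
  then have "\<forall>e>0. \<exists>B. continuity_set M B \<and> measure M (sym_diff A B) < e"
  proof (induction rule: sigma_sets.induct)
    case (Basic U)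
    then show ?case
      using open_continuity_set_approx[OF sb fm] by (metis mem_Collect_eq)
  next
    case Empty
    then show ?case
      using continuity_set_empty by fastforce
  next
    case (Compl A)
    have "sym_diff (UNIV - A) (- B) = sym_diff A B" for B
      by blast
    then show ?case
      using Compl.IH continuity_set_Compl[OF sb] by metis
  next
    case (Union A)
    have "A i \<in> sets M" for i
      using Union.hyps sb by (simp add: sets_borel)
    then show ?case
      using continuity_set_approx_UN[OF sb fm] Union.IH by blast
  qed
  with \<open>e > 0\<close> that show thesis by blast
qed

definition null_boundary_approximable :: "'a::metric_space measure \<Rightarrow> ('a \<Rightarrow> real) \<Rightarrow> bool" where
  "null_boundary_approximable M f \<longleftrightarrow>
    (\<forall>e>0. \<exists>g. integrable M g \<and> boundary g \<in> null_sets M \<and> (\<integral>x. \<bar>f x - g x\<bar> \<partial>M) < e)"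

lemma integral_abs_add_le:
  fixes u v :: "'a \<Rightarrow> real"
  assumes "integrable M u" "integrable M v"
  shows "(\<integral>x. \<bar>u x + v x\<bar> \<partial>M) \<le> (\<integral>x. \<bar>u x\<bar> \<partial>M) + (\<integral>x. \<bar>v x\<bar> \<partial>M)"
proof -
  have "(\<integral>x. \<bar>u x + v x\<bar> \<partial>M) \<le> (\<integral>x. \<bar>u x\<bar> + \<bar>v x\<bar> \<partial>M)"
    using assms by (intro integral_mono) (auto simp: abs_triangle_ineq)
  also have "\<dots> = (\<integral>x. \<bar>u x\<bar> \<partial>M) + (\<integral>x. \<bar>v x\<bar> \<partial>M)"
    using assms by (intro Bochner_Integration.integral_add) auto
  finally show ?thesis .
qed

lemma null_boundary_approximable_indicator:
  assumes sb: "sets M = sets borel" and fm: "finite_measure M" and "A \<in> sets M"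
  shows "null_boundary_approximable M (\<lambda>x. indicator A x *\<^sub>R c)"
  unfolding null_boundary_approximable_def
proof (intro allI impI)
  fix e :: real assume "e > 0"
  interpret finite_measure M by fact
  obtain B where B: "continuity_set M B" "measure M (sym_diff A B) < e / (\<bar>c\<bar> + 1)"
    using continuity_set_approx[OF sb fm \<open>A \<in> sets M\<close>, of "e / (\<bar>c\<bar> + 1)"] \<open>e > 0\<close> by auto
  define g where "g x = indicator B x *\<^sub>R c" for x
  have "B \<in> sets M" using B(1) by (simp add: continuity_set_def)
  then have "integrable M g"
    unfolding g_def by (intro integrable_scaleR_left) (simp add: integrable_indicator_iff emeasure_eq_measure)
  moreover have "boundary g \<subseteq> boundary (indicator B :: 'a \<Rightarrow> real)"
    unfolding g_def by (rule boundary_comp_subset)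
  then have "boundary g \<in> null_sets M"
    using B(1) unfolding continuity_set_def by (intro boundary_in_null_sets[OF sb]) auto
  moreover have "(\<integral>x. \<bar>indicator A x *\<^sub>R c - g x\<bar> \<partial>M) < e"
  proof -
    have "\<bar>indicator A x *\<^sub>R c - g x\<bar> = indicator (sym_diff A B) x * \<bar>c\<bar>" for x
      unfolding g_def by (simp add: indicator_def)
    moreover have "sym_diff A B \<in> sets M"
      using \<open>A \<in> sets M\<close> \<open>B \<in> sets M\<close> by auto
    ultimately have "(\<integral>x. \<bar>indicator A x *\<^sub>R c - g x\<bar> \<partial>M) = measure M (sym_diff A B) * \<bar>c\<bar>"
      by simp
    also have "\<dots> \<le> e / (\<bar>c\<bar> + 1) * \<bar>c\<bar>"
      using B(2) by (intro mult_right_mono) auto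
    also have "\<dots> < e"
      using \<open>e > 0\<close> by (simp add: field_simps)
    finally show ?thesis .
  qed
  ultimately show "\<exists>g. integrable M g \<and> boundary g \<in> null_sets M \<and>
      (\<integral>x. \<bar>indicator A x *\<^sub>R c - g x\<bar> \<partial>M) < e"
    by blast
qed

lemma null_boundary_approximable_add:
  assumes sb: "sets M = sets borel"
    and "integrable M f" "null_boundary_approximable M f"
    and "integrable M g" "null_boundary_approximable M g"
  shows "null_boundary_approximable M (\<lambda>x. f x + g x)"
  unfolding null_boundary_approximable_def
proof (intro allI impI)
  fix e :: real assume "e > 0"
  then obtain f' g' where f': "integrable M f'" "boundary f' \<in> null_sets M"
      "(\<integral>x. \<bar>f x - f' x\<bar> \<partial>M) < e / 2"
    and g': "integrable M g'" "boundary g' \<in> null_sets M"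
      "(\<integral>x. \<bar>g x - g' x\<bar> \<partial>M) < e / 2"
    using assms(3,5) unfolding null_boundary_approximable_def by (meson half_gt_zero)
  have "boundary (\<lambda>x. f' x + g' x) \<in> null_sets M"
    using boundary_in_null_sets[OF sb boundary_comp2_subset null_sets.Un[OF f'(2) g'(2)]] .
  moreover have "(\<integral>x. \<bar>f x + g x - (f' x + g' x)\<bar> \<partial>M) < e"
  proof -
    have "(\<integral>x. \<bar>f x + g x - (f' x + g' x)\<bar> \<partial>M) = (\<integral>x. \<bar>(f x - f' x) + (g x - g' x)\<bar> \<partial>M)"
      by (simp add: algebra_simps)
    also have "\<dots> \<le> (\<integral>x. \<bar>f x - f' x\<bar> \<partial>M) + (\<integral>x. \<bar>g x - g' x\<bar> \<partial>M)"
      using assms(2,4) f'(1) g'(1) by (intro integral_abs_add_le) auto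
    finally show ?thesis
      using f'(3) g'(3) by linarith
  qed
  ultimately show "\<exists>h. integrable M h \<and> boundary h \<in> null_sets M \<and>
      (\<integral>x. \<bar>f x + g x - h x\<bar> \<partial>M) < e"
    using f'(1) g'(1) by blast
qed

lemma null_boundary_approximable_dominated_limit:
  assumes "\<And>i. integrable M (s i)" "\<And>i. null_boundary_approximable M (s i)"
    and "\<And>x. x \<in> space M \<Longrightarrow> (\<lambda>i. s i x) \<longlonglongrightarrow> f x"
    and "integrable M w" "\<And>i x. x \<in> space M \<Longrightarrow> \<bar>s i x\<bar> \<le> w x"
    and "integrable M f"
  shows "null_boundary_approximable M f"
  unfolding null_boundary_approximable_def
proof (intro allI impI)
  fix e :: real assume "e > 0"
  have "(\<lambda>i. \<integral>x. \<bar>f x - s i x\<bar> \<partial>M) \<longlonglongrightarrow> (\<integral>x. 0 \<partial>M)"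
  proof (rule integral_dominated_convergence[where w = "\<lambda>x. \<bar>f x\<bar> + w x"])
    show "AE x in M. (\<lambda>i. \<bar>f x - s i x\<bar>) \<longlonglongrightarrow> 0"
    proof (rule AE_I2)
      fix x assume "x \<in> space M"
      then have "(\<lambda>i. \<bar>f x - s i x\<bar>) \<longlonglongrightarrow> \<bar>f x - f x\<bar>"
        using assms(3) by (intro tendsto_rabs tendsto_diff tendsto_const)
      then show "(\<lambda>i. \<bar>f x - s i x\<bar>) \<longlonglongrightarrow> 0"
        by simp
    qed
    show "AE x in M. norm \<bar>f x - s i x\<bar> \<le> \<bar>f x\<bar> + w x" for i
      using assms(5) by (intro AE_I2) (simp add: abs_triangle_ineq4 order_trans[OF abs_triangle_ineq4])
  qed (use assms in auto)
  from order_tendstoD(2)[OF this, of "e / 2"] \<open>e > 0\<close>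
  obtain i where i: "(\<integral>x. \<bar>f x - s i x\<bar> \<partial>M) < e / 2"
    unfolding eventually_sequentially by auto
  obtain g where g: "integrable M g" "boundary g \<in> null_sets M"
    "(\<integral>x. \<bar>s i x - g x\<bar> \<partial>M) < e / 2"
    using assms(2)[of i] \<open>e > 0\<close> unfolding null_boundary_approximable_def by (meson half_gt_zero)
  have "(\<integral>x. \<bar>f x - g x\<bar> \<partial>M) = (\<integral>x. \<bar>(f x - s i x) + (s i x - g x)\<bar> \<partial>M)"
    by simp
  also have "\<dots> \<le> (\<integral>x. \<bar>f x - s i x\<bar> \<partial>M) + (\<integral>x. \<bar>s i x - g x\<bar> \<partial>M)"
    using assms(1,6) g(1) by (intro integral_abs_add_le) auto
  finally have "(\<integral>x. \<bar>f x - g x\<bar> \<partial>M) < e"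
    using i g(3) by linarith
  with g(1,2) show "\<exists>g. integrable M g \<and> boundary g \<in> null_sets M \<and> (\<integral>x. \<bar>f x - g x\<bar> \<partial>M) < e"
    by blast
qed

theorem proposition2:
  fixes M :: "('a::metric_space) measure" and \<eta> :: "'a \<Rightarrow> real" and \<delta> :: real
  assumes "doubling_metric TYPE('a)"
    and "sets M = sets borel"
    and "finite_measure M"
    and "integrable M \<eta>"
    and "\<delta> > 0"
  shows "\<exists>\<eta>'. integrable M \<eta>' \<and> boundary \<eta>' \<in> null_sets M
           \<and> (\<integral>x. \<bar>\<eta> x - \<eta>' x\<bar> \<partial>M) < \<delta>"
proof -
  have "null_boundary_approximable M \<eta>"
    using \<open>integrable M \<eta>\<close>
  proof (induction rule: integrable_induct)
    case (base A c)
    then show ?case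
      using null_boundary_approximable_indicator[OF assms(2,3)] by blast
  next
    case (add f g)
    then show ?case
      using null_boundary_approximable_add[OF assms(2)] by blast
  next
    case (lim f s)
    have bound: "\<bar>s i x\<bar> \<le> 2 * \<bar>f x\<bar>" if "x \<in> space M" for i x
      using lim.hyps(3)[OF that] by simp
    have "integrable M (\<lambda>x. 2 * \<bar>f x\<bar>)"
      using lim.hyps(4) by simp
    from null_boundary_approximable_dominated_limit[OF lim.hyps(1) lim.IH lim.hyps(2) this bound lim.hyps(4)]
    show ?case .
  qed
  with \<open>\<delta> > 0\<close> show ?thesis
    unfolding null_boundary_approximable_def by blast
qed

end
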